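(* Let $A\in\mathbb{R}^{m\times n}$ with $m>n$, and let $A=U_A\Sigma_AV_A^T$ be its economy SVD, $U_A\in\mathbb{R}^{m\times n}$ with orthonormal columns. Let $\lambda>0$. Let $X\in\mathbb{R}^{s\times m}$ with $m>s\geq n$ be a matrix such that, for some $0<\epsilon<1$, $$1-\epsilon<\sigma_{\min}(XU_A)\le\sigma_{\max}(XU_A)<1+\epsilon .$$ Suppose $R\in\mathbb{R}^{n\times n}$ is an upper triangular matrix such that $R^TR=A^TX^TXA+\lambda I_n$. Then $$\kappa_2(BR^{-1})\le\frac{1+\epsilon}{1-\epsilon},\qquad\text{where } B=\begin{bmatrix}A\\ \sqrt{\lambda}I_n\end{bmatrix}\in\mathbb{R}^{(m+n)\times n}.$$
   Context: $\sigma_{\min},\sigma_{\max}$ denote the smallest and largest singular values (of an $s\times n$ matrix, among its $n$ singular values), and $\kappa_2(M)=\sigma_{\max}(M)/\sigma_{\min}(M)$ is the spectral condition number of a full-column-rank matrix $M$. Note $R$ is invertible since $R^TR$ is positive definite. *)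

theory Defs
  imports "HOL-Analysis.Analysis"
begin

definition gram_eigenvalues :: "real^'n^'s \<Rightarrow> real set" where
  "gram_eigenvalues M = {\<mu>. \<exists>v. v \<noteq> 0 \<and> (transpose M ** M) *v v = \<mu> *\<^sub>R v}"

definition singular_values :: "real^'n^'s \<Rightarrow> real set" where
  "singular_values M = sqrt ` gram_eigenvalues M"

definition sigma_min :: "real^'n^'s \<Rightarrow> real" where
  "sigma_min M = Min (singular_values M)"

definition sigma_max :: "real^'n^'s \<Rightarrow> real" where
  "sigma_max M = Max (singular_values M)"

definition kappa2 :: "real^'n^'s \<Rightarrow> real" where
  "kappa2 M = sigma_max M / sigma_min M"

definition upper_triangular :: "((real, 'k::{finite,wellorder}) vec, 'k) vec \<Rightarrow> bool" where
  "upper_triangular R \<longleftrightarrow> (\<forall>i j. j < i \<longrightarrow> R $ i $ j = 0)"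

definition is_diagonal :: "real^'n^'n \<Rightarrow> bool" where
  "is_diagonal D \<longleftrightarrow> (\<forall>i j. i \<noteq> j \<longrightarrow> D $ i $ j = 0)"

definition stack_reg :: "real^'n^'m \<Rightarrow> real \<Rightarrow> real^'n^('m + 'n)" where
  "stack_reg A lam = (\<chi> i j. case i of Inl k \<Rightarrow> A $ k $ j
                                 | Inr k \<Rightarrow> (if k = j then sqrt lam else 0))"

end

theory Submission
  imports Defs
begin

text \<open>Write \<open>C = B R\<inverse>\<close> and \<open>x = R y\<close>. The Gram identity for \<open>R\<close> and the shape of \<open>B\<close> give
  \<open>\<parallel>x\<parallel>\<^sup>2 = \<parallel>X A y\<parallel>\<^sup>2 + \<lambda>\<parallel>y\<parallel>\<^sup>2\<close> and \<open>\<parallel>C x\<parallel>\<^sup>2 = \<parallel>A y\<parallel>\<^sup>2 + \<lambda>\<parallel>y\<parallel>\<^sup>2\<close>. As \<open>U\<close> has orthonormal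
  columns, \<open>\<parallel>A y\<parallel> = \<parallel>z\<parallel>\<close> and \<open>X A y = X U z\<close> for \<open>z = \<Sigma> V\<^sup>T y\<close>, so the singular value bounds on
  \<open>X U\<close> give \<open>(1-\<epsilon>)\<parallel>A y\<parallel> \<le> \<parallel>X A y\<parallel> \<le> (1+\<epsilon>)\<parallel>A y\<parallel>\<close>; adding the common term \<open>\<lambda>\<parallel>y\<parallel>\<^sup>2\<close>
  keeps these bounds because \<open>1-\<epsilon> \<le> 1 \<le> 1+\<epsilon>\<close>. Hence \<open>\<parallel>x\<parallel>/(1+\<epsilon>) \<le> \<parallel>C x\<parallel> \<le> \<parallel>x\<parallel>/(1-\<epsilon>)\<close>, and
  every singular value of \<open>C\<close>, being the ratio \<open>\<parallel>C v\<parallel>/\<parallel>v\<parallel>\<close> at an eigenvector \<open>v\<close> of \<open>C\<^sup>T C\<close>, lies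
  in \<open>[1/(1+\<epsilon>), 1/(1-\<epsilon>)]\<close>. In the other direction, \<open>\<sigma>\<^sub>m\<^sub>i\<^sub>n\<close> and \<open>\<sigma>\<^sub>m\<^sub>a\<^sub>x\<close> bound
  \<open>\<parallel>M x\<parallel>/\<parallel>x\<parallel>\<close> because the maximum of the Rayleigh quotient of a symmetric matrix over the
  unit sphere is attained at an eigenvector.\<close>

lemma norm_matrix_vector_mult_sq:
  fixes M :: "real^'n^'m"
  shows "norm (M *v x) ^ 2 = x \<bullet> ((transpose M ** M) *v x)"
  by (metis dot_lmul_matrix inner_commute matrix_vector_mul_assoc power2_norm_eq_inner
      transpose_matrix_vector)

lemma symmetric_matrix_inner_commute:
  fixes G :: "real^'n^'n"
  assumes "transpose G = G"
  shows "x \<bullet> (G *v y) = y \<bullet> (G *v x)"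
  by (metis assms dot_lmul_matrix inner_commute transpose_matrix_vector)

lemma linear_coeff_zero_if_quadratic_nonpos:
  fixes a b :: real
  assumes "\<And>t. a * t + b * t^2 \<le> 0"
  shows "a = 0"
proof -
  define c where "c = \<bar>b\<bar> + 1"
  have "c > 0" "c + b \<ge> 1" unfolding c_def by linarith+
  have "(a * (a / c) + b * (a / c)^2) * c^2 = a^2 * (c + b)"
    using \<open>c > 0\<close> by (simp add: field_simps power2_eq_square)
  moreover have "(a * (a / c) + b * (a / c)^2) * c^2 \<le> 0"
    by (rule mult_nonpos_nonneg[OF assms]) simp
  ultimately have "a^2 * (c + b) \<le> 0" by simp
  with \<open>c + b \<ge> 1\<close> have "a^2 \<le> 0"
    by (smt (verit) mult_le_cancel_left1 zero_le_power2)
  thus ?thesis by simp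
qed

text \<open>Equality case of a Rayleigh-quotient bound: perturbing \<open>v\<close> in the direction
  \<open>w = G v - \<mu> v\<close> keeps the bound, and the first-order term of that perturbation is \<open>2 (w \<bullet> w)\<close>.\<close>
lemma symmetric_matrix_eigenvector_if_rayleigh_extremal:
  fixes G :: "real^'n^'n"
  assumes sym: "transpose G = G"
    and bound: "\<And>x. x \<bullet> (G *v x) \<le> \<mu> * (x \<bullet> x)"
    and attained: "v \<bullet> (G *v v) = \<mu> * (v \<bullet> v)"
  shows "G *v v = \<mu> *\<^sub>R v"
proof -
  define w where "w = G *v v - \<mu> *\<^sub>R v"
  have "2 * (w \<bullet> w) * t + (w \<bullet> (G *v w) - \<mu> * (w \<bullet> w)) * t^2 \<le> 0" for t
  proof -
    have "(v + t *\<^sub>R w) \<bullet> (G *v (v + t *\<^sub>R w))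
        = v \<bullet> (G *v v) + 2 * t * (w \<bullet> (G *v v)) + t^2 * (w \<bullet> (G *v w))"
      using symmetric_matrix_inner_commute[OF sym, of v w]
      by (simp add: matrix_vector_right_distrib matrix_vector_mult_scaleR inner_add_left
          inner_add_right power2_eq_square algebra_simps)
    moreover have "(v + t *\<^sub>R w) \<bullet> (v + t *\<^sub>R w) = v \<bullet> v + 2 * t * (v \<bullet> w) + t^2 * (w \<bullet> w)"
      by (simp add: inner_add_left inner_add_right power2_eq_square algebra_simps inner_commute)
    moreover have "w \<bullet> w = w \<bullet> (G *v v - \<mu> *\<^sub>R v)"
      by (simp only: w_def[symmetric])
    then have "w \<bullet> (G *v v) - \<mu> * (v \<bullet> w) = w \<bullet> w"
      by (simp add: inner_diff_right inner_commute)
    ultimately show ?thesis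
      using bound[of "v + t *\<^sub>R w"] attained by (simp add: algebra_simps)
  qed
  then have "2 * (w \<bullet> w) = 0" by (rule linear_coeff_zero_if_quadratic_nonpos)
  thus ?thesis unfolding w_def by simp
qed

lemma symmetric_matrix_max_eigenvalue:
  fixes G :: "real^'n^'n"
  assumes sym: "transpose G = G"
  obtains v \<mu> where "v \<noteq> 0" "G *v v = \<mu> *\<^sub>R v" "\<And>x. x \<bullet> (G *v x) \<le> \<mu> * (x \<bullet> x)"
proof -
  define q where "q x = x \<bullet> (G *v x)" for x
  have "continuous_on (sphere 0 1) q"
    unfolding q_def by (intro continuous_on_inner continuous_on_id linear_continuous_on
        matrix_vector_mul_bounded_linear)
  moreover have "sphere (0::real^'n) 1 \<noteq> {}" by simp
  ultimately obtain v where v: "v \<in> sphere 0 1" and vmax: "\<And>y. y \<in> sphere 0 1 \<Longrightarrow> q y \<le> q v"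
    using continuous_attains_sup[OF compact_sphere] by blast
  have "v \<bullet> v = 1" using v by (simp add: dot_square_norm)
  have bound: "q x \<le> q v * (x \<bullet> x)" for x
  proof (cases "x = 0")
    case True thus ?thesis by (simp add: q_def)
  next
    case False
    have "q ((1 / norm x) *\<^sub>R x) \<le> q v" using False by (intro vmax) simp
    then have "q x / norm x ^ 2 \<le> q v"
      by (simp add: q_def matrix_vector_mult_scaleR power2_eq_square)
    thus ?thesis using False by (simp add: divide_le_eq dot_square_norm)
  qed
  have "G *v v = q v *\<^sub>R v"
    using sym bound \<open>v \<bullet> v = 1\<close>
    by (intro symmetric_matrix_eigenvector_if_rayleigh_extremal) (auto simp: q_def)
  moreover have "v \<noteq> 0" using v by auto
  ultimately show ?thesis using bound by (intro that) (auto simp: q_def)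
qed

lemma symmetric_matrix_min_eigenvalue:
  fixes G :: "real^'n^'n"
  assumes "transpose G = G"
  obtains v \<mu> where "v \<noteq> 0" "G *v v = \<mu> *\<^sub>R v" "\<And>x. \<mu> * (x \<bullet> x) \<le> x \<bullet> (G *v x)"
proof -
  have neg: "(- G) *v x = - (G *v x)" for x
    by (simp add: matrix_vector_mult_def vec_eq_iff sum_negf)
  have "transpose (- G) = - G" using assms by (simp add: transpose_def vec_eq_iff)
  then obtain v \<mu> where v: "v \<noteq> 0" "(- G) *v v = \<mu> *\<^sub>R v"
    and bound: "\<And>x. x \<bullet> ((- G) *v x) \<le> \<mu> * (x \<bullet> x)"
    using symmetric_matrix_max_eigenvalue by metis
  have "G *v v = (- \<mu>) *\<^sub>R v" using v(2) unfolding neg by (metis minus_equation_iff scaleR_minus_left)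
  moreover have "(- \<mu>) * (x \<bullet> x) \<le> x \<bullet> (G *v x)" for x using bound[of x] by (simp add: neg)
  ultimately show ?thesis using that v(1) by blast
qed

lemma finite_eigenvalues_symmetric_matrix:
  fixes G :: "real^'n^'n"
  assumes sym: "transpose G = G"
  shows "finite {\<mu>. \<exists>v. v \<noteq> 0 \<and> G *v v = \<mu> *\<^sub>R v}"
proof -
  define E where "E = {\<mu>. \<exists>v. v \<noteq> 0 \<and> G *v v = \<mu> *\<^sub>R v}"
  define f where "f \<mu> = (SOME v. v \<noteq> 0 \<and> G *v v = \<mu> *\<^sub>R v)" for \<mu>
  have f: "f \<mu> \<noteq> 0" "G *v f \<mu> = \<mu> *\<^sub>R f \<mu>" if "\<mu> \<in> E" for \<mu>
    using someI_ex[OF that[unfolded E_def mem_Collect_eq]] unfolding f_def by blast+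
  have inj: "inj_on f E"
  proof (rule inj_onI)
    fix a b assume ab: "a \<in> E" "b \<in> E" "f a = f b"
    have "a *\<^sub>R f a = G *v f a" using f(2)[OF ab(1)] by simp
    also have "\<dots> = b *\<^sub>R f a" using f(2)[OF ab(2)] ab(3) by simp
    finally have "(a - b) *\<^sub>R f a = 0" by (simp add: scaleR_diff_left)
    thus "a = b" using f(1)[OF ab(1)] by simp
  qed
  have ortho: "orthogonal (f a) (f b)" if "a \<in> E" "b \<in> E" "f a \<noteq> f b" for a b
  proof -
    have "a * (f a \<bullet> f b) = f b \<bullet> (G *v f a)" using f[OF that(1)] by (simp add: inner_commute)
    also have "\<dots> = b * (f a \<bullet> f b)"
      using symmetric_matrix_inner_commute[OF sym] f[OF that(2)] by simp
    finally have "(a - b) * (f a \<bullet> f b) = 0" by (simp add: algebra_simps)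
    moreover have "a \<noteq> b" using that(3) by blast
    ultimately show ?thesis unfolding orthogonal_def by simp
  qed
  have "pairwise orthogonal (f ` E)"
    unfolding pairwise_image by (rule pairwiseI) (blast intro: ortho)
  moreover have "0 \<notin> f ` E" using f(1) by (metis imageE)
  ultimately have "independent (f ` E)" by (rule pairwise_orthogonal_independent)
  then have "finite (f ` E)" using independent_bound by blast
  then show ?thesis using finite_imageD[OF _ inj] unfolding E_def by blast
qed

lemma symmetric_gram_matrix: "transpose (transpose M ** M) = transpose M ** (M :: real^'n^'m)"
  by (simp add: matrix_transpose_mul)

lemma norm_gram_eigenvector:
  fixes M :: "real^'n^'m"
  assumes "(transpose M ** M) *v v = \<mu> *\<^sub>R v"
  shows "norm (M *v v) ^ 2 = \<mu> * norm v ^ 2"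
proof -
  have "norm (M *v v) ^ 2 = v \<bullet> (\<mu> *\<^sub>R v)"
    using assms norm_matrix_vector_mult_sq by metis
  thus ?thesis by (simp add: power2_norm_eq_inner)
qed

lemma gram_eigenvalue_nonneg:
  assumes "\<mu> \<in> gram_eigenvalues M"
  shows "\<mu> \<ge> 0"
proof -
  obtain v where "v \<noteq> 0" "(transpose M ** M) *v v = \<mu> *\<^sub>R v"
    using assms unfolding gram_eigenvalues_def by blast
  then have "\<mu> * norm v ^ 2 \<ge> 0" and "norm v ^ 2 > 0"
    using norm_gram_eigenvector[of M v \<mu>] by (metis zero_le_power2, simp)
  thus ?thesis by (simp add: zero_le_mult_iff)
qed

lemma singular_value_nonneg: "s \<in> singular_values M \<Longrightarrow> s \<ge> 0"
  unfolding singular_values_def using gram_eigenvalue_nonneg by auto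

lemma singular_value_norm_eq:
  fixes M :: "real^'n^'m"
  assumes "s \<in> singular_values M"
  obtains v where "v \<noteq> 0" "norm (M *v v) = s * norm v"
proof -
  obtain \<mu> v where s: "s = sqrt \<mu>" and \<mu>: "\<mu> \<in> gram_eigenvalues M"
    and v: "v \<noteq> 0" "(transpose M ** M) *v v = \<mu> *\<^sub>R v"
    using assms unfolding singular_values_def gram_eigenvalues_def by blast
  have "norm (M *v v) = sqrt (\<mu> * norm v ^ 2)"
    using real_sqrt_unique[OF norm_gram_eigenvector[OF v(2)] norm_ge_zero] by simp
  also have "\<dots> = s * norm v" using s by (simp add: real_sqrt_mult)
  finally show ?thesis using v(1) that by blast
qed

lemma finite_singular_values: "finite (singular_values M)"
  unfolding singular_values_def gram_eigenvalues_def
  by (intro finite_imageI finite_eigenvalues_symmetric_matrix symmetric_gram_matrix)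

lemma singular_values_nonempty: "singular_values (M :: real^'n^'m) \<noteq> {}"
proof -
  obtain v \<mu> where "v \<noteq> 0" "(transpose M ** M) *v v = \<mu> *\<^sub>R v"
    using symmetric_matrix_max_eigenvalue[OF symmetric_gram_matrix[of M]] by blast
  then show ?thesis unfolding singular_values_def gram_eigenvalues_def by blast
qed

lemma sigma_min_nonneg: "sigma_min (M :: real^'n^'m) \<ge> 0"
  unfolding sigma_min_def
  by (rule singular_value_nonneg[OF Min_in[OF finite_singular_values singular_values_nonempty]])

lemma sigma_max_nonneg: "sigma_max (M :: real^'n^'m) \<ge> 0"
  unfolding sigma_max_def
  by (rule singular_value_nonneg[OF Max_in[OF finite_singular_values singular_values_nonempty]])

lemma sigma_min_le_norm:
  fixes M :: "real^'n^'m"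
  shows "sigma_min M * norm x \<le> norm (M *v x)"
proof -
  obtain v \<mu> where v: "v \<noteq> 0" "(transpose M ** M) *v v = \<mu> *\<^sub>R v"
    and bound: "\<And>x. \<mu> * (x \<bullet> x) \<le> x \<bullet> ((transpose M ** M) *v x)"
    using symmetric_matrix_min_eigenvalue[OF symmetric_gram_matrix[of M]] by blast
  have "\<mu> \<in> gram_eigenvalues M" using v unfolding gram_eigenvalues_def by blast
  then have "sqrt \<mu> \<in> singular_values M" "\<mu> \<ge> 0"
    unfolding singular_values_def by (blast, rule gram_eigenvalue_nonneg)
  then have "sigma_min M \<le> sqrt \<mu>"
    unfolding sigma_min_def by (intro Min_le finite_singular_values)
  then have "sigma_min M ^ 2 \<le> sqrt \<mu> ^ 2"
    using sigma_min_nonneg by (rule power_mono)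
  then have "sigma_min M ^ 2 \<le> \<mu>"
    using \<open>\<mu> \<ge> 0\<close> by simp
  then have "sigma_min M ^ 2 * norm x ^ 2 \<le> \<mu> * norm x ^ 2"
    by (rule mult_right_mono) simp
  then have "(sigma_min M * norm x) ^ 2 \<le> \<mu> * norm x ^ 2"
    by (simp only: power_mult_distrib)
  also have "\<dots> \<le> norm (M *v x) ^ 2"
    using bound[of x] unfolding norm_matrix_vector_mult_sq unfolding power2_norm_eq_inner .
  finally show ?thesis by (rule power2_le_imp_le) simp
qed

lemma norm_le_sigma_max:
  fixes M :: "real^'n^'m"
  shows "norm (M *v x) \<le> sigma_max M * norm x"
proof -
  obtain v \<mu> where v: "v \<noteq> 0" "(transpose M ** M) *v v = \<mu> *\<^sub>R v"
    and bound: "\<And>x. x \<bullet> ((transpose M ** M) *v x) \<le> \<mu> * (x \<bullet> x)"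
    using symmetric_matrix_max_eigenvalue[OF symmetric_gram_matrix[of M]] by blast
  have "\<mu> \<in> gram_eigenvalues M" using v unfolding gram_eigenvalues_def by blast
  then have "sqrt \<mu> \<in> singular_values M" "\<mu> \<ge> 0"
    unfolding singular_values_def by (blast, rule gram_eigenvalue_nonneg)
  then have "sqrt \<mu> \<le> sigma_max M"
    unfolding sigma_max_def by (intro Max_ge finite_singular_values)
  then have "sqrt \<mu> ^ 2 \<le> sigma_max M ^ 2"
    using real_sqrt_ge_zero[OF \<open>\<mu> \<ge> 0\<close>] by (rule power_mono)
  then have "\<mu> \<le> sigma_max M ^ 2"
    using \<open>\<mu> \<ge> 0\<close> by simp
  have "norm (M *v x) ^ 2 \<le> \<mu> * norm x ^ 2"
    using bound[of x] unfolding norm_matrix_vector_mult_sq unfolding power2_norm_eq_inner .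
  also have "\<dots> \<le> sigma_max M ^ 2 * norm x ^ 2"
    using \<open>\<mu> \<le> sigma_max M ^ 2\<close> by (rule mult_right_mono) simp
  also have "\<dots> = (sigma_max M * norm x) ^ 2"
    by (simp only: power_mult_distrib)
  finally show ?thesis
    by (rule power2_le_imp_le) (simp add: sigma_max_nonneg)
qed

lemma singular_values_between:
  fixes M :: "real^'n^'m"
  assumes lower: "\<And>x. a * norm x \<le> norm (M *v x)"
    and upper: "\<And>x. norm (M *v x) \<le> b * norm x"
    and "s \<in> singular_values M"
  shows "a \<le> s" "s \<le> b"
proof -
  obtain v where "v \<noteq> 0" "norm (M *v v) = s * norm v"
    using singular_value_norm_eq[OF \<open>s \<in> singular_values M\<close>] .
  then show "a \<le> s" "s \<le> b"
    using lower[of v] upper[of v] by simp_all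
qed

lemma kappa2_le_if_norm_bounds:
  fixes M :: "real^'n^'m"
  assumes "\<And>x. a * norm x \<le> norm (M *v x)"
    and "\<And>x. norm (M *v x) \<le> b * norm x"
    and "a > 0"
  shows "kappa2 M \<le> b / a"
proof -
  note between = singular_values_between[OF assms(1,2)]
    and fin = finite_singular_values[of M] and ne = singular_values_nonempty[of M]
  obtain s where "s \<in> singular_values M" using ne by blast
  have min: "a \<le> sigma_min M"
    unfolding sigma_min_def Min_ge_iff[OF fin ne] using between by blast
  have max: "sigma_max M \<le> b"
    unfolding sigma_max_def Max_le_iff[OF fin ne] using between by blast
  have "0 \<le> b"
    using between[OF \<open>s \<in> singular_values M\<close>] \<open>a > 0\<close> by linarith
  then show ?thesis
    unfolding kappa2_def using max \<open>a > 0\<close> min by (rule frac_le)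
qed

lemma norm_stack_reg_sq:
  fixes A :: "real^'n^'m"
  assumes "lam \<ge> 0"
  shows "norm (stack_reg A lam *v y) ^ 2 = norm (A *v y) ^ 2 + lam * norm y ^ 2"
proof -
  let ?w = "stack_reg A lam *v y"
  have top: "?w $ Inl k = (A *v y) $ k" for k
    by (simp add: stack_reg_def matrix_vector_mult_def)
  have bottom: "?w $ Inr k = sqrt lam * y $ k" for k
    by (simp add: stack_reg_def matrix_vector_mult_def if_distrib[of "\<lambda>a. a * _"] cong: if_cong)
  have "?w \<bullet> ?w = (\<Sum>k\<in>UNIV. (A *v y) $ k * (A *v y) $ k)
                  + (\<Sum>k\<in>UNIV. (sqrt lam * y $ k) * (sqrt lam * y $ k))"
    unfolding inner_vec_def UNIV_Plus_UNIV[symmetric] by (subst sum.Plus) (auto simp: top bottom)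
  also have "\<dots> = (A *v y) \<bullet> (A *v y) + lam * (y \<bullet> y)"
  proof -
    have sq: "(sqrt lam * t) * (sqrt lam * t) = lam * (t * t)" for t :: real
      using assms by (simp add: power2_eq_square[symmetric] power_mult_distrib)
    show ?thesis unfolding sq by (simp add: inner_vec_def sum_distrib_left)
  qed
  finally show ?thesis by (simp only: power2_norm_eq_inner)
qed

lemma norm_isometry_matrix_vector_mult:
  fixes U :: "real^'n^'m"
  assumes "transpose U ** U = mat 1"
  shows "norm (U *v z) = norm z"
proof -
  have "norm (U *v z) ^ 2 = norm z ^ 2"
    unfolding norm_matrix_vector_mult_sq assms matrix_vector_mul_lid
    unfolding power2_norm_eq_inner ..
  then show ?thesis by (rule power2_eq_imp_eq) simp_all
qed

lemma norm_shifted_gram_sq: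
  fixes R :: "real^'n^'n" and M :: "real^'n^'m"
  assumes "transpose R ** R = transpose M ** M + lam *\<^sub>R mat 1"
  shows "norm (R *v y) ^ 2 = norm (M *v y) ^ 2 + lam * norm y ^ 2"
proof -
  have "(transpose M ** M + lam *\<^sub>R mat 1) *v y = (transpose M ** M) *v y + lam *\<^sub>R y"
    by (simp add: matrix_vector_mult_add_rdistrib flip: scaleR_matrix_vector_assoc)
  then show ?thesis
    unfolding norm_matrix_vector_mult_sq assms
    by (simp add: inner_add_right power2_norm_eq_inner)
qed

lemma invertible_if_shifted_gram:
  fixes R :: "real^'n^'n" and M :: "real^'n^'m"
  assumes "transpose R ** R = transpose M ** M + lam *\<^sub>R mat 1" and "lam > 0"
  shows "invertible R"
proof -
  have "y = 0" if "R *v y = 0" for y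
  proof -
    have "norm (M *v y) ^ 2 + lam * norm y ^ 2 = 0"
      using norm_shifted_gram_sq[OF assms(1), of y] that by simp
    then have "lam * norm y ^ 2 = 0"
      using \<open>lam > 0\<close> by (smt (verit) mult_nonneg_nonneg zero_le_power2)
    then show ?thesis using \<open>lam > 0\<close> by simp
  qed
  then show ?thesis
    using matrix_left_invertible_ker invertible_left_inverse by blast
qed

lemma matrix_mul_matrix_inv:
  fixes R :: "real^'n^'n"
  assumes "invertible R"
  shows "R ** matrix_inv R = mat 1"
  using assms unfolding invertible_def matrix_inv_def by (rule someI2_ex) blast

text \<open>The regularization term \<open>lam \<parallel>y\<parallel>\<^sup>2\<close> is common to both squared norms, which is why
  \<open>c \<le> 1 \<le> d\<close> is needed.\<close>
lemma norm_stack_reg_shifted_gram_bounds: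
  fixes A :: "real^'n^'m" and M :: "real^'n^'s" and R :: "real^'n^'n"
  assumes gram: "transpose R ** R = transpose M ** M + lam *\<^sub>R mat 1" and "lam \<ge> 0"
    and "0 \<le> c" "c \<le> 1" "1 \<le> d"
    and lower: "\<And>y. c * norm (A *v y) \<le> norm (M *v y)"
    and upper: "\<And>y. norm (M *v y) \<le> d * norm (A *v y)"
  shows "c * norm (stack_reg A lam *v y) \<le> norm (R *v y)"
    and "norm (R *v y) \<le> d * norm (stack_reg A lam *v y)"
proof -
  define a where "a = norm (A *v y) ^ 2"
  define b where "b = norm (M *v y) ^ 2"
  define L where "L = lam * norm y ^ 2"
  have stack: "norm (stack_reg A lam *v y) ^ 2 = a + L"
    unfolding a_def L_def using \<open>lam \<ge> 0\<close> by (rule norm_stack_reg_sq)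
  have R: "norm (R *v y) ^ 2 = b + L"
    unfolding b_def L_def using gram by (rule norm_shifted_gram_sq)
  have "L \<ge> 0" "a \<ge> 0" unfolding L_def a_def using \<open>lam \<ge> 0\<close> by simp_all
  have "c^2 * a \<le> b"
    using power_mono[OF lower[of y], of 2] \<open>0 \<le> c\<close> unfolding a_def b_def
    by (simp add: power_mult_distrib)
  moreover have "c^2 * L \<le> L"
    using \<open>L \<ge> 0\<close> \<open>0 \<le> c\<close> \<open>c \<le> 1\<close> by (intro mult_left_le_one_le power_le_one) simp_all
  ultimately have "c^2 * (a + L) \<le> b + L"
    unfolding distrib_left by linarith
  then have "(c * norm (stack_reg A lam *v y)) ^ 2 \<le> norm (R *v y) ^ 2"
    unfolding power_mult_distrib stack R .
  then show "c * norm (stack_reg A lam *v y) \<le> norm (R *v y)"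
    by (rule power2_le_imp_le) simp
  have "b \<le> d^2 * a"
    using power_mono[OF upper[of y], of 2] unfolding a_def b_def
    by (simp add: power_mult_distrib)
  moreover have "L \<le> d^2 * L"
    using mult_right_mono[OF one_le_power[OF \<open>1 \<le> d\<close>, of 2] \<open>L \<ge> 0\<close>] by simp
  ultimately have "b + L \<le> d^2 * (a + L)"
    unfolding distrib_left by linarith
  then have "norm (R *v y) ^ 2 \<le> (d * norm (stack_reg A lam *v y)) ^ 2"
    unfolding power_mult_distrib stack R .
  then show "norm (R *v y) \<le> d * norm (stack_reg A lam *v y)"
    by (rule power2_le_imp_le) (use \<open>1 \<le> d\<close> in simp)
qed

lemma kappa2_stack_reg_preconditioned_le:
  fixes A :: "real^'n^'m" and M :: "real^'n^'s" and R :: "real^'n^'n"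
  assumes gram: "transpose R ** R = transpose M ** M + lam *\<^sub>R mat 1" and "lam > 0"
    and "0 < c" "c \<le> 1" "1 \<le> d"
    and "\<And>y. c * norm (A *v y) \<le> norm (M *v y)"
    and "\<And>y. norm (M *v y) \<le> d * norm (A *v y)"
  shows "kappa2 (stack_reg A lam ** matrix_inv R) \<le> d / c"
proof -
  let ?C = "stack_reg A lam ** matrix_inv R"
  note bounds = norm_stack_reg_shifted_gram_bounds[OF gram less_imp_le[OF \<open>lam > 0\<close>]
      less_imp_le[OF \<open>0 < c\<close>] \<open>c \<le> 1\<close> \<open>1 \<le> d\<close> assms(6,7)]
  have R_inv: "R *v (matrix_inv R *v x) = x" for x
    using matrix_mul_matrix_inv[OF invertible_if_shifted_gram[OF gram \<open>lam > 0\<close>]]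
    by (simp add: matrix_vector_mul_assoc)
  have C: "?C *v x = stack_reg A lam *v (matrix_inv R *v x)" for x
    by (simp add: matrix_vector_mul_assoc)
  have "(1 / d) * norm x \<le> norm (?C *v x)" for x
    using bounds(2)[of "matrix_inv R *v x"] assms by (simp add: C R_inv field_simps)
  moreover have "norm (?C *v x) \<le> (1 / c) * norm x" for x
    using bounds(1)[of "matrix_inv R *v x"] assms by (simp add: C R_inv field_simps)
  ultimately have "kappa2 ?C \<le> (1 / c) / (1 / d)"
    using \<open>1 \<le> d\<close> by (intro kappa2_le_if_norm_bounds) simp_all
  then show ?thesis by simp
qed

theorem lemma2p1:
  fixes A :: "((real, 'n::{finite,wellorder}) vec, 'm::finite) vec"
    and U :: "((real, 'n) vec, 'm) vec"
    and S :: "((real, 'n) vec, 'n) vec" and V :: "((real, 'n) vec, 'n) vec"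
    and X :: "((real, 'm) vec, 's::finite) vec" and R :: "((real, 'n) vec, 'n) vec"
    and lam eps :: real
  assumes "CARD('m) > CARD('s)" and "CARD('s) \<ge> CARD('n)"
    and "transpose U ** U = mat 1"
    and "is_diagonal S" and "\<forall>i. S $ i $ i \<ge> 0"
    and "orthogonal_matrix V"
    and "A = U ** S ** transpose V"
    and "lam > 0"
    and "0 < eps" and "eps < 1"
    and "1 - eps < sigma_min (X ** U)"
    and "sigma_min (X ** U) \<le> sigma_max (X ** U)"
    and "sigma_max (X ** U) < 1 + eps"
    and "upper_triangular R"
    and "transpose R ** R = transpose A ** transpose X ** X ** A + lam *\<^sub>R mat 1"
  shows "kappa2 (stack_reg A lam ** matrix_inv R) \<le> (1 + eps) / (1 - eps)"
proof -
  let ?W = "S ** transpose V"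
  have XA: "(X ** A) *v y = (X ** U) *v (?W *v y)" for y
    using assms(7) by (simp add: matrix_vector_mul_assoc matrix_mul_assoc)
  have "A *v y = U *v (?W *v y)" for y
    using assms(7) by (simp add: matrix_vector_mul_assoc matrix_mul_assoc)
  then have A: "norm (A *v y) = norm (?W *v y)" for y
    using norm_isometry_matrix_vector_mult[OF assms(3)] by simp
  have lower: "(1 - eps) * norm (A *v y) \<le> norm ((X ** A) *v y)" for y
  proof -
    have "(1 - eps) * norm (?W *v y) \<le> sigma_min (X ** U) * norm (?W *v y)"
      using assms(11) by (intro mult_right_mono) simp_all
    also have "\<dots> \<le> norm ((X ** U) *v (?W *v y))" by (rule sigma_min_le_norm)
    finally show ?thesis unfolding A XA .
  qed
  have upper: "norm ((X ** A) *v y) \<le> (1 + eps) * norm (A *v y)" for y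
  proof -
    have "norm ((X ** U) *v (?W *v y)) \<le> sigma_max (X ** U) * norm (?W *v y)"
      by (rule norm_le_sigma_max)
    also have "\<dots> \<le> (1 + eps) * norm (?W *v y)"
      using assms(13) by (intro mult_right_mono) simp_all
    finally show ?thesis unfolding A XA .
  qed
  have "transpose R ** R = transpose (X ** A) ** (X ** A) + lam *\<^sub>R mat 1"
    using assms(15) by (simp add: matrix_transpose_mul matrix_mul_assoc)
  then show ?thesis
    using assms(8-10) lower upper by (intro kappa2_stack_reg_preconditioned_le) simp_all
qed

end
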